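(* Let $X$ and $Y$ be self-dense (no isolated points), locally connected, compact metric spaces, let $f\colon X\to X$ be an inner-distal homeomorphism, and let $g\colon Y\to Y$ be a homeomorphism which is an extension of $f$ under an inner-light homomorphism $\pi\colon Y\to X$. Then $g$ is inner-distal.
   Context: For a homeomorphism $h\colon Z\to Z$ of a metric space $(Z,d)$, the proximal cell of $z\in Z$ is $\mathcal{P}(z)=\{w\in Z\colon \inf_{n\in\mathbb{Z}} d(h^n(z),h^n(w))=0\}$; $h$ is inner-distal if $\operatorname{Int}\mathcal{P}(z)=\emptyset$ for every $z\in Z$. A homomorphism from $g\colon Y\to Y$ to $f\colon X\to X$ is a continuous surjective map $\pi\colon Y\to X$ with $f\circ\pi=\pi\circ g$; then $g$ is called an extension of $f$ (under $\pi$). A subcontinuum of $Y$ is a non-empty compact connected subset. The map $\pi$ is inner-light if $\operatorname{Int} C=\emptyset$ for every subcontinuum $C\subseteq Y$ such that $\operatorname{Int}\pi(C)=\emptyset$. *)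

theory Defs
  imports "HOL-Analysis.Analysis"
begin

definition iter_int :: "('a \<Rightarrow> 'a) \<Rightarrow> ('a \<Rightarrow> 'a) \<Rightarrow> int \<Rightarrow> 'a \<Rightarrow> 'a" where
  "iter_int h h' n = (if 0 \<le> n then h ^^ nat n else h' ^^ nat (- n))"

definition self_homeo :: "'a::metric_space set \<Rightarrow> ('a \<Rightarrow> 'a) \<Rightarrow> bool" where
  "self_homeo Z h \<longleftrightarrow> (\<exists>h'. homeomorphism Z Z h h')"

definition homeo_inv :: "'a::metric_space set \<Rightarrow> ('a \<Rightarrow> 'a) \<Rightarrow> ('a \<Rightarrow> 'a)" where
  "homeo_inv Z h = (SOME h'. homeomorphism Z Z h h')"

definition proximal_cell :: "'a::metric_space set \<Rightarrow> ('a \<Rightarrow> 'a) \<Rightarrow> 'a \<Rightarrow> 'a set" where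
  "proximal_cell Z h z = {w \<in> Z. (INF n\<in>(UNIV::int set).
       dist (iter_int h (homeo_inv Z h) n z) (iter_int h (homeo_inv Z h) n w)) = 0}"

definition rel_interior_in :: "'a::metric_space set \<Rightarrow> 'a set \<Rightarrow> 'a set" where
  "rel_interior_in Z A = (top_of_set Z) interior_of A"

definition inner_distal :: "'a::metric_space set \<Rightarrow> ('a \<Rightarrow> 'a) \<Rightarrow> bool" where
  "inner_distal Z h \<longleftrightarrow> (\<forall>z\<in>Z. rel_interior_in Z (proximal_cell Z h z) = {})"

definition homomorphism_dyn ::
  "'b::metric_space set \<Rightarrow> ('b \<Rightarrow> 'b) \<Rightarrow> 'a::metric_space set \<Rightarrow> ('a \<Rightarrow> 'a) \<Rightarrow> ('b \<Rightarrow> 'a) \<Rightarrow> bool" where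
  "homomorphism_dyn Y g X f \<pi> \<longleftrightarrow> continuous_on Y \<pi> \<and> \<pi> ` Y = X \<and> (\<forall>y\<in>Y. f (\<pi> y) = \<pi> (g y))"

definition subcontinuum :: "'a::metric_space set \<Rightarrow> 'a set \<Rightarrow> bool" where
  "subcontinuum Y C \<longleftrightarrow> C \<noteq> {} \<and> C \<subseteq> Y \<and> compact C \<and> connected C"

definition inner_light ::
  "'b::metric_space set \<Rightarrow> 'a::metric_space set \<Rightarrow> ('b \<Rightarrow> 'a) \<Rightarrow> bool" where
  "inner_light Y X \<pi> \<longleftrightarrow> (\<forall>C. subcontinuum Y C \<and> rel_interior_in X (\<pi> ` C) = {}
        \<longrightarrow> rel_interior_in Y C = {})"

definition self_dense :: "'a::metric_space set \<Rightarrow> bool" where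
  "self_dense Z \<longleftrightarrow> (\<forall>z\<in>Z. z islimpt Z)"

end

theory Submission
  imports Defs
begin

text \<open>A homomorphism maps proximal pairs to proximal pairs (by uniform continuity of \<open>\<pi>\<close>
  on the compact space \<open>Y\<close>), so it maps each proximal cell of \<open>g\<close> into a proximal cell of \<open>f\<close>.
  If a proximal cell of \<open>g\<close> had interior, local connectedness would give a subcontinuum with
  interior inside it; since \<open>\<pi>\<close> is inner-light, its image has interior, and this image lies in
  a proximal cell of \<open>f\<close>, contradicting inner-distality of \<open>f\<close>.\<close>

lemma INF_eq_zero_iff_nonneg:
  fixes D :: "'i \<Rightarrow> real"
  assumes "\<And>n. D n \<ge> 0"
  shows "(INF n. D n) = 0 \<longleftrightarrow> (\<forall>e>0. \<exists>n. D n < e)"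
proof -
  have bdd: "bdd_below (range D)"
    using assms by (metis bdd_belowI2)
  have "(INF n. D n) \<ge> 0"
    using assms by (auto intro: cINF_greatest)
  moreover have "(INF n. D n) < e \<longleftrightarrow> (\<exists>n. D n < e)" for e
    using cINF_less_iff[OF _ bdd] by auto
  ultimately show ?thesis
    by (metis order_less_irrefl order_le_less)
qed

lemma homeomorphism_homeo_inv:
  assumes "self_homeo Z h"
  shows "homeomorphism Z Z h (homeo_inv Z h)"
  using assms unfolding self_homeo_def homeo_inv_def by (metis someI_ex)

lemma funpow_semiconj:
  assumes "\<And>y. y \<in> Y \<Longrightarrow> g y \<in> Y \<and> \<pi> (g y) = f (\<pi> y)" and "y \<in> Y"
  shows "(g ^^ k) y \<in> Y \<and> \<pi> ((g ^^ k) y) = (f ^^ k) (\<pi> y)"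
  by (induction k) (use assms in auto)

lemma homeomorphism_inv_semiconj:
  assumes "homeomorphism Y Y g g'" and "homeomorphism X X f f'"
    and "\<pi> ` Y \<subseteq> X" and "\<And>y. y \<in> Y \<Longrightarrow> \<pi> (g y) = f (\<pi> y)" and "y \<in> Y"
  shows "\<pi> (g' y) = f' (\<pi> y)"
proof -
  have "g' y \<in> Y" and "g (g' y) = y"
    using assms(1,5) unfolding homeomorphism_def by auto
  then have "\<pi> y = f (\<pi> (g' y))"
    using assms(4) by metis
  moreover have "\<pi> (g' y) \<in> X"
    using \<open>g' y \<in> Y\<close> assms(3) by auto
  ultimately show ?thesis
    using assms(2) unfolding homeomorphism_def by auto
qed

lemma iter_int_semiconj:
  assumes hg: "homeomorphism Y Y g g'" and hf: "homeomorphism X X f f'"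
    and "\<pi> ` Y \<subseteq> X" and comm: "\<And>y. y \<in> Y \<Longrightarrow> \<pi> (g y) = f (\<pi> y)" and "y \<in> Y"
  shows "iter_int g g' n y \<in> Y \<and> \<pi> (iter_int g g' n y) = iter_int f f' n (\<pi> y)"
proof -
  have fwd: "g v \<in> Y \<and> \<pi> (g v) = f (\<pi> v)" if "v \<in> Y" for v
    using hg comm that unfolding homeomorphism_def by auto
  have bwd: "g' v \<in> Y \<and> \<pi> (g' v) = f' (\<pi> v)" if "v \<in> Y" for v
    using hg homeomorphism_inv_semiconj[of Y g g' X f f' \<pi>, OF assms(1-4) that] that
    unfolding homeomorphism_def by auto
  show ?thesis
    unfolding iter_int_def
    using funpow_semiconj[of Y g \<pi> f, OF fwd \<open>y \<in> Y\<close>]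
      funpow_semiconj[of Y g' \<pi> f', OF bwd \<open>y \<in> Y\<close>]
    by simp
qed

lemma homomorphism_dyn_proximal_cell:
  assumes "compact Y" "self_homeo Y g" "self_homeo X f"
    and "homomorphism_dyn Y g X f \<pi>" and "y \<in> Y"
  shows "\<pi> ` proximal_cell Y g y \<subseteq> proximal_cell X f (\<pi> y)"
proof
  fix x assume "x \<in> \<pi> ` proximal_cell Y g y"
  then obtain w where x: "x = \<pi> w" and "w \<in> proximal_cell Y g y" by blast
  define g' f' where "g' = homeo_inv Y g" and "f' = homeo_inv X f"
  have hg: "homeomorphism Y Y g g'" and hf: "homeomorphism X X f f'"
    unfolding g'_def f'_def using assms(2,3) by (simp_all add: homeomorphism_homeo_inv)
  have cont: "continuous_on Y \<pi>" and \<pi>Y: "\<pi> ` Y = X" and comm: "\<And>y. y \<in> Y \<Longrightarrow> \<pi> (g y) = f (\<pi> y)"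
    using assms(4) unfolding homomorphism_dyn_def by auto
  have semiconj: "\<And>v n. v \<in> Y \<Longrightarrow>
      iter_int g g' n v \<in> Y \<and> \<pi> (iter_int g g' n v) = iter_int f f' n (\<pi> v)"
    using iter_int_semiconj[of Y g g' X f f' \<pi>, OF hg hf _ comm] \<pi>Y by blast
  have "w \<in> Y" and close: "\<forall>d>0. \<exists>n. dist (iter_int g g' n y) (iter_int g g' n w) < d"
    using \<open>w \<in> proximal_cell Y g y\<close>
    unfolding proximal_cell_def g'_def by (auto simp: INF_eq_zero_iff_nonneg)
  have "\<exists>n. dist (iter_int f f' n (\<pi> y)) (iter_int f f' n (\<pi> w)) < e" if "e > 0" for e
  proof -
    obtain d where "d > 0" and d: "\<And>a b. a \<in> Y \<Longrightarrow> b \<in> Y \<Longrightarrow> dist b a < d \<Longrightarrow> dist (\<pi> b) (\<pi> a) < e"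
      using compact_uniformly_continuous[OF cont assms(1)] \<open>e > 0\<close>
      unfolding uniformly_continuous_on_def by metis
    then obtain n where "dist (iter_int g g' n y) (iter_int g g' n w) < d"
      using close by blast
    then show ?thesis
      using d semiconj[OF \<open>y \<in> Y\<close>, of n] semiconj[OF \<open>w \<in> Y\<close>, of n] by metis
  qed
  then show "x \<in> proximal_cell X f (\<pi> y)"
    using x \<open>w \<in> Y\<close> \<pi>Y
    unfolding proximal_cell_def f'_def by (auto simp: INF_eq_zero_iff_nonneg)
qed

lemma locally_connected_subcontinuum_neighbourhood:
  assumes "compact Y" "locally connected Y"
    and "openin (top_of_set Y) U" "u \<in> U"
  obtains C where "subcontinuum Y C" "C \<subseteq> U" "u \<in> rel_interior_in Y C"
proof -
  obtain e where "e > 0" and e: "ball u e \<inter> Y \<subseteq> U"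
    using assms(3,4) openin_contains_ball by metis
  have "u \<in> Y"
    using assms(3,4) openin_subset by fastforce
  have "openin (top_of_set Y) (Y \<inter> ball u (e/2))"
    by (simp add: openin_open_Int)
  then obtain W where W: "openin (top_of_set Y) W" "connected W" "u \<in> W" "W \<subseteq> Y \<inter> ball u (e/2)"
    using assms(2) \<open>u \<in> Y\<close> \<open>e > 0\<close> unfolding locally_connected
    by (metis centre_in_ball half_gt_zero IntI)
  have "closed Y"
    using assms(1) compact_imp_closed by auto
  then have closure_W: "closure W \<subseteq> Y \<inter> cball u (e/2)"
    using W(4) ball_subset_cball by (intro closure_minimal) auto
  then have "closure W \<subseteq> Y"
    by blast
  have "Y \<inter> cball u (e/2) \<subseteq> ball u e \<inter> Y"
    using \<open>e > 0\<close> by auto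
  with closure_W e have "closure W \<subseteq> U"
    by blast
  show thesis
  proof
    have "compact (closure W)"
      using compact_Int_closed[OF assms(1) closed_closure, of W] \<open>closure W \<subseteq> Y\<close>
      by (simp add: Int_absorb1)
    then show "subcontinuum Y (closure W)"
      unfolding subcontinuum_def
      using \<open>closure W \<subseteq> Y\<close> W(2,3) closure_subset connected_imp_connected_closure by blast
    show "closure W \<subseteq> U" by fact
    show "u \<in> rel_interior_in Y (closure W)"
      unfolding rel_interior_in_def
      using interior_of_maximal[of W "closure W" "top_of_set Y"] W closure_subset by auto
  qed
qed

lemma inner_light_interior_image:
  assumes "compact Y" "locally connected Y" "inner_light Y X \<pi>"
    and "rel_interior_in X (\<pi> ` A) = {}"
  shows "rel_interior_in Y A = {}"
proof (rule ccontr)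
  assume "rel_interior_in Y A \<noteq> {}"
  then obtain u where "u \<in> (top_of_set Y) interior_of A"
    unfolding rel_interior_in_def by blast
  then obtain C where C: "subcontinuum Y C" "C \<subseteq> (top_of_set Y) interior_of A" "u \<in> rel_interior_in Y C"
    using locally_connected_subcontinuum_neighbourhood[OF assms(1,2) openin_interior_of]
    by blast
  have "C \<subseteq> A"
    using C(2) interior_of_subset[of "top_of_set Y" A] by (rule order_trans)
  then have "(top_of_set X) interior_of (\<pi> ` C) \<subseteq> (top_of_set X) interior_of (\<pi> ` A)"
    by (intro interior_of_mono image_mono)
  then have "rel_interior_in X (\<pi> ` C) = {}"
    using assms(4) unfolding rel_interior_in_def by blast
  then show False
    using assms(3) C(1,3) unfolding inner_light_def by auto
qed

theorem theorem2p11: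
  fixes X :: "'a::metric_space set" and Y :: "'b::metric_space set"
    and f :: "'a \<Rightarrow> 'a" and g :: "'b \<Rightarrow> 'b" and \<pi> :: "'b \<Rightarrow> 'a"
  assumes "compact X" "compact Y"
    and "self_dense X" "self_dense Y"
    and "locally connected X" "locally connected Y"
    and "self_homeo X f" "inner_distal X f"
    and "self_homeo Y g"
    and "homomorphism_dyn Y g X f \<pi>" "inner_light Y X \<pi>"
  shows "inner_distal Y g"
  unfolding inner_distal_def
proof
  fix y assume "y \<in> Y"
  then have "\<pi> y \<in> X"
    using assms(10) unfolding homomorphism_dyn_def by auto
  have "\<pi> ` proximal_cell Y g y \<subseteq> proximal_cell X f (\<pi> y)"
    using homomorphism_dyn_proximal_cell[OF assms(2,9,7,10) \<open>y \<in> Y\<close>] .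
  then have "rel_interior_in X (\<pi> ` proximal_cell Y g y) = {}"
    using assms(8) \<open>\<pi> y \<in> X\<close> interior_of_mono
    unfolding inner_distal_def rel_interior_in_def by blast
  then show "rel_interior_in Y (proximal_cell Y g y) = {}"
    using inner_light_interior_image[OF assms(2,6,11)] by blast
qed

end
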